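(* Let $G$ be a connected graph with $\omega(G)=n(G)-3$. Then $$n(G)-8\le \dim_l(G)\le n(G)-3.$$ Furthermore, both bounds are sharp, i.e., for each bound there exist connected graphs $G$ with $\omega(G)=n(G)-3$ attaining it.
   Context: All graphs are finite and simple. $n(G)$ is the number of vertices and $\omega(G)$ the clique number of $G$. For vertices $x,y$ of a connected graph $G$, $d_G(x,y)$ is the length of a shortest $x,y$-path. A vertex $w$ distinguishes vertices $u,v$ if $d_G(u,w)\neq d_G(v,w)$. A set $W\subseteq V(G)$ is a local resolving set of $G$ if for every pair of adjacent vertices $u,v\in V(G)\setminus W$ some vertex of $W$ distinguishes $u$ and $v$. The local metric dimension $\dim_l(G)$ is the minimum cardinality of a local resolving set of $G$. *)

theory Defs
  imports Main
begin

definition graph :: "'a set \<Rightarrow> ('a \<Rightarrow> 'a \<Rightarrow> bool) \<Rightarrow> bool" where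
  "graph V E \<longleftrightarrow> finite V \<and> (\<forall>u v. E u v \<longrightarrow> u \<in> V \<and> v \<in> V)
     \<and> (\<forall>u v. E u v \<longrightarrow> E v u) \<and> (\<forall>v. \<not> E v v)"

fun walk :: "('a \<Rightarrow> 'a \<Rightarrow> bool) \<Rightarrow> 'a list \<Rightarrow> bool" where
  "walk E [] = False"
| "walk E [x] = True"
| "walk E (x # y # xs) = (E x y \<and> walk E (y # xs))"

definition connected :: "'a set \<Rightarrow> ('a \<Rightarrow> 'a \<Rightarrow> bool) \<Rightarrow> bool" where
  "connected V E \<longleftrightarrow> V \<noteq> {} \<and>
     (\<forall>u\<in>V. \<forall>v\<in>V. \<exists>xs. walk E xs \<and> hd xs = u \<and> last xs = v)"

definition dist :: "('a \<Rightarrow> 'a \<Rightarrow> bool) \<Rightarrow> 'a \<Rightarrow> 'a \<Rightarrow> nat" where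
  "dist E u v = (LEAST k. \<exists>xs. walk E xs \<and> hd xs = u \<and> last xs = v \<and> length xs = k + 1)"

definition clique :: "'a set \<Rightarrow> ('a \<Rightarrow> 'a \<Rightarrow> bool) \<Rightarrow> 'a set \<Rightarrow> bool" where
  "clique V E K \<longleftrightarrow> K \<subseteq> V \<and> (\<forall>u\<in>K. \<forall>v\<in>K. u \<noteq> v \<longrightarrow> E u v)"

definition clique_number :: "'a set \<Rightarrow> ('a \<Rightarrow> 'a \<Rightarrow> bool) \<Rightarrow> nat" where
  "clique_number V E = Max {card K | K. clique V E K}"

definition local_resolving_set :: "'a set \<Rightarrow> ('a \<Rightarrow> 'a \<Rightarrow> bool) \<Rightarrow> 'a set \<Rightarrow> bool" where
  "local_resolving_set V E W \<longleftrightarrow> W \<subseteq> V \<and>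
     (\<forall>u \<in> V - W. \<forall>v \<in> V - W. E u v \<longrightarrow> (\<exists>w\<in>W. dist E u w \<noteq> dist E v w))"

definition local_metric_dim :: "'a set \<Rightarrow> ('a \<Rightarrow> 'a \<Rightarrow> bool) \<Rightarrow> nat" where
  "local_metric_dim V E = (LEAST k. \<exists>W. local_resolving_set V E W \<and> card W = k)"

end

theory Submission
  imports Defs
begin

text \<open>
  Lower bound: let \<open>K\<close> be a maximum clique and \<open>W\<close> a local resolving set. A vertex
  of \<open>K \<inter> W\<close> is at distance 1 from all other clique vertices, so the pairwise adjacent
  vertices of \<open>K - W\<close> must be told apart by \<open>W - K\<close>. Distances from a clique to a fixed
  vertex take at most two consecutive values, hence a vertex of \<open>K - W\<close> is determined by
  the set of \<open>w \<in> W - K\<close> at which its distance agrees with that of a fixed clique vertex.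
  Thus \<open>|K - W| \<le> 2^|W - K|\<close>, which gives \<open>n \<le> |W| + 2^(n - \<omega>)\<close>.

  Upper bound: pick non-adjacent \<open>p, q\<close>. If some third vertex \<open>r\<close> is a true twin of
  neither \<open>p\<close> nor \<open>q\<close> (adjacent, with equal neighbourhoods outside \<open>{p, q, r}\<close>),
  every adjacent pair inside \<open>{p, q, r}\<close> is resolved by a vertex adjacent to exactly one of
  them, so \<open>V - {p, q, r}\<close> is a local resolving set. Otherwise every vertex \<open>r \<noteq> p, q\<close>
  is a true twin of \<open>p\<close> or of \<open>q\<close>; then either \<open>p\<close> or \<open>q\<close> together with all these
  vertices is a clique of order \<open>n - 1\<close>, or no edge leaves \<open>p\<close> and its twins, contradicting
  connectivity.

  Sharpness: \<open>K\<^sub>8\<close> plus three vertices reading off the binary digits of the clique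
  vertices attains \<open>n - 8\<close>, and the 5-cycle attains \<open>n - 3\<close>.
\<close>

lemma walk_iff_successively: "walk E xs \<longleftrightarrow> xs \<noteq> [] \<and> successively E xs"
  by (induction E xs rule: walk.induct) auto

lemma walk_append:
  assumes "walk E xs" "walk E ys" "last xs = hd ys"
  shows "walk E (xs @ tl ys)"
  using assms by (cases ys) (auto simp: walk_iff_successively successively_append_iff successively_Cons)

lemma walk_rev:
  assumes "walk E xs" "\<And>x y. E x y \<Longrightarrow> E y x"
  shows "walk E (rev xs)"
  using assms by (auto simp: walk_iff_successively elim: successively_mono)

lemma walk_closed:
  assumes "walk E xs" "hd xs \<in> A" "\<And>u v. u \<in> A \<Longrightarrow> E u v \<Longrightarrow> v \<in> A"
  shows "last xs \<in> A"
  using assms by (induction E xs rule: walk.induct) auto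

lemma connected_crossing_edge:
  assumes "connected V E" "p \<in> X" "p \<in> V" "q \<in> V" "q \<notin> X"
  obtains u v where "u \<in> X" "v \<notin> X" "E u v"
proof -
  obtain xs where "walk E xs" "hd xs = p" "last xs = q"
    using assms(1,3,4) unfolding connected_def by blast
  then show ?thesis
    using walk_closed[of E xs X] assms(2,5) that by blast
qed

lemma connected_if_walks_to:
  assumes "graph V E" "c \<in> V" "\<And>u. u \<in> V \<Longrightarrow> \<exists>xs. walk E xs \<and> hd xs = u \<and> last xs = c"
  shows "connected V E"
  unfolding connected_def
proof (intro conjI ballI)
  show "V \<noteq> {}" using assms(2) by blast
next
  fix u v assume "u \<in> V" "v \<in> V"
  then obtain xs ys where xs: "walk E xs" "hd xs = u" "last xs = c"
    and ys: "walk E ys" "hd ys = v" "last ys = c"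
    using assms(3) by blast
  have sym: "\<And>x y. E x y \<Longrightarrow> E y x" using assms(1) unfolding graph_def by blast
  have rys: "walk E (rev ys)" "hd (rev ys) = c" "last (rev ys) = v"
    using walk_rev[OF ys(1) sym] ys by (auto simp: hd_rev last_rev)
  have "walk E (xs @ tl (rev ys))"
    using walk_append[OF xs(1) rys(1)] xs(3) rys(2) by simp
  moreover have "hd (xs @ tl (rev ys)) = u" "last (xs @ tl (rev ys)) = v"
    using xs rys by (cases "rev ys"; auto simp: walk_iff_successively)+
  ultimately show "\<exists>zs. walk E zs \<and> hd zs = u \<and> last zs = v" by blast
qed

lemma dist_le_walk:
  assumes "walk E xs"
  shows "dist E (hd xs) (last xs) + 1 \<le> length xs"
proof -
  have "xs \<noteq> []" using assms by (auto simp: walk_iff_successively)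
  moreover have "dist E (hd xs) (last xs) \<le> length xs - 1"
    unfolding dist_def using assms \<open>xs \<noteq> []\<close> by (intro Least_le) auto
  ultimately show ?thesis by (cases xs) auto
qed

lemma shortest_walk_exists:
  assumes "walk E xs"
  obtains ys where "walk E ys" "hd ys = hd xs" "last ys = last xs"
    "length ys = dist E (hd xs) (last xs) + 1"
proof -
  have "xs \<noteq> []" using assms by (auto simp: walk_iff_successively)
  then have "\<exists>k ys. walk E ys \<and> hd ys = hd xs \<and> last ys = last xs \<and> length ys = k + 1"
    using assms by (intro exI[of _ "length xs - 1"] exI[of _ xs]) auto
  from LeastI_ex[OF this] show ?thesis
    using that unfolding dist_def by blast
qed

lemma connected_shortest_walk_exists:
  assumes "connected V E" "u \<in> V" "v \<in> V"
  obtains xs where "walk E xs" "hd xs = u" "last xs = v" "length xs = dist E u v + 1"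
proof -
  obtain xs where "walk E xs" "hd xs = u" "last xs = v"
    using assms unfolding connected_def by blast
  then show ?thesis using shortest_walk_exists that by metis
qed

lemma dist_eq_1_iff:
  assumes "graph V E" "connected V E" "u \<in> V" "v \<in> V"
  shows "dist E u v = 1 \<longleftrightarrow> E u v"
proof
  assume "dist E u v = 1"
  then obtain xs where "walk E xs" "hd xs = u" "last xs = v" "length xs = 2"
    using connected_shortest_walk_exists[OF assms(2-4)] by (metis one_add_one)
  then show "E u v" by (cases xs; cases "tl xs") auto
next
  assume uv: "E u v"
  then have "dist E u v \<le> 1" using dist_le_walk[of E "[u, v]"] by simp
  moreover have "dist E u v \<noteq> 0"
  proof
    assume "dist E u v = 0"
    then obtain xs where "walk E xs" "hd xs = u" "last xs = v" "length xs = 1"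
      using connected_shortest_walk_exists[OF assms(2-4)] by (metis add_0)
    then have "u = v" by (cases xs) auto
    with uv assms(1) show False unfolding graph_def by blast
  qed
  ultimately show "dist E u v = 1" by linarith
qed

lemma dist_eq_2:
  assumes "u \<noteq> v" "\<not> E u v" "E u c" "E c v"
  shows "dist E u v = 2"
proof -
  have walk: "walk E [u, c, v]" using assms by simp
  obtain xs where xs: "walk E xs" "hd xs = u" "last xs = v" "length xs = dist E u v + 1"
    using shortest_walk_exists[OF walk] by auto
  have "dist E u v \<le> 2" using dist_le_walk[OF walk] by simp
  moreover have "length xs \<noteq> 1" "length xs \<noteq> 2"
    using xs assms(1,2) by (cases xs; cases "tl xs"; auto)+
  ultimately show ?thesis using xs(4) by linarith
qed

lemma dist_adjacent_le:
  assumes "connected V E" "E u v" "v \<in> V" "w \<in> V"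
  shows "dist E u w \<le> dist E v w + 1"
proof -
  obtain xs where xs: "walk E xs" "hd xs = v" "last xs = w" "length xs = dist E v w + 1"
    using connected_shortest_walk_exists[OF assms(1,3,4)] .
  then have "walk E (u # xs)" using assms(2) by (cases xs) auto
  from dist_le_walk[OF this] show ?thesis
    using xs by (cases xs) auto
qed

lemma dist_neq_if_adjacent_to_one:
  assumes "graph V E" "connected V E" "a \<in> V" "b \<in> V" "w \<in> V" "E w a \<noteq> E w b"
  shows "dist E a w \<noteq> dist E b w"
proof -
  have "E a w = E w a" "E b w = E w b" using assms(1) unfolding graph_def by blast+
  then show ?thesis using dist_eq_1_iff[OF assms(1,2)] assms(3-6) by metis
qed

lemma
  assumes "finite V"
  shows clique_number_attained: "\<exists>K. clique V E K \<and> card K = clique_number V E"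
    and card_le_clique_number: "clique V E K \<Longrightarrow> card K \<le> clique_number V E"
proof -
  let ?S = "{card K | K. clique V E K}"
  have "?S \<subseteq> {..card V}"
    using assms by (auto simp: clique_def card_mono)
  then have fin: "finite ?S" by (rule finite_subset) simp
  have "clique V E {}" by (simp add: clique_def)
  then have "?S \<noteq> {}" by blast
  from Max_in[OF fin this] show "\<exists>K. clique V E K \<and> card K = clique_number V E"
    unfolding clique_number_def by auto
  show "clique V E K \<Longrightarrow> card K \<le> clique_number V E"
    unfolding clique_number_def using fin by (intro Max_ge) auto
qed

lemma clique_number_eqI:
  assumes "finite V" "clique V E K" "card K = k" "\<And>C. clique V E C \<Longrightarrow> card C \<le> k"
  shows "clique_number V E = k"
proof -
  obtain C where "clique V E C" "card C = clique_number V E"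
    using clique_number_attained[OF assms(1)] by blast
  then show ?thesis
    using card_le_clique_number[OF assms(1,2)] assms(3,4) by fastforce
qed

lemma local_metric_dim_le:
  assumes "local_resolving_set V E W"
  shows "local_metric_dim V E \<le> card W"
  unfolding local_metric_dim_def using assms by (intro Least_le) blast

lemma minimum_local_resolving_set_exists:
  obtains W where "local_resolving_set V E W" "card W = local_metric_dim V E"
proof -
  have "local_resolving_set V E V" by (simp add: local_resolving_set_def)
  then have "\<exists>k W. local_resolving_set V E W \<and> card W = k" by blast
  from LeastI_ex[OF this] show ?thesis
    using that unfolding local_metric_dim_def by blast
qed

lemma card_clique_diff_local_resolving_set:
  assumes g: "graph V E" and c: "connected V E"
    and K: "clique V E K" and W: "local_resolving_set V E W"
  shows "card (K - W) \<le> 2 ^ card (W - K)"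
proof (cases "K - W = {}")
  case False
  then obtain u0 where u0: "u0 \<in> K - W" by blast
  have KV: "K \<subseteq> V" and WV: "W \<subseteq> V"
    using K W unfolding clique_def local_resolving_set_def by auto
  have fin: "finite (W - K)" using g WV finite_subset unfolding graph_def by blast
  have close: "dist E u w \<le> dist E v w + 1" if "u \<in> K" "v \<in> K" "w \<in> V" for u v w
  proof (cases "u = v")
    case False
    then have "E u v" using K that unfolding clique_def by blast
    then show ?thesis using dist_adjacent_le[OF c] that KV by blast
  qed simp
  define profile where "profile u = {w \<in> W - K. dist E u w = dist E u0 w}" for u
  have "inj_on profile (K - W)"
  proof (rule inj_onI, rule ccontr)
    fix u v assume u: "u \<in> K - W" and v: "v \<in> K - W" and eq: "profile u = profile v" and "u \<noteq> v"
    then have "E u v" using K unfolding clique_def by blast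
    then obtain w where w: "w \<in> W" "dist E u w \<noteq> dist E v w"
      using W u v KV unfolding local_resolving_set_def by blast
    have V: "u \<in> V" "v \<in> V" "w \<in> V" using u v w(1) KV WV by auto
    have "w \<notin> K"
    proof
      assume "w \<in> K"
      then have "E u w" "E v w" using K u v w(1) unfolding clique_def by auto
      then show False
        using w(2) dist_eq_1_iff[OF g c V(1,3)] dist_eq_1_iff[OF g c V(2,3)] by simp
    qed
    then have "dist E u w = dist E u0 w \<longleftrightarrow> dist E v w = dist E u0 w"
      using eq w(1) unfolding profile_def by blast
    \<comment> \<open>the distances of \<open>u\<close>, \<open>v\<close>, \<open>u0\<close> to \<open>w\<close> pairwise differ by at most 1\<close>
    then show False
      using w(2) close[of u v w] close[of v u w] close[of u u0 w] close[of u0 u w]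
        close[of v u0 w] close[of u0 v w] u v u0 V(3) by auto
  qed
  moreover have "profile ` (K - W) \<subseteq> Pow (W - K)" unfolding profile_def by auto
  ultimately have "card (K - W) \<le> card (Pow (W - K))"
    using card_inj_on_le fin by blast
  then show ?thesis using card_Pow[OF fin] by simp
qed (metis card.empty zero_le)

lemma pow2_add_le:
  fixes t d :: nat
  assumes "t \<le> d"
  shows "2 ^ t + d \<le> 2 ^ d + t"
  using assms
proof (induction d rule: dec_induct)
  case (step d)
  have "1 \<le> (2::nat) ^ d" "(2::nat) ^ Suc d = 2 ^ d + 2 ^ d" by simp_all
  then show ?case using step.IH by linarith
qed simp

lemma card_le_local_metric_dim_plus_pow2:
  assumes g: "graph V E" and c: "connected V E"
  shows "card V \<le> local_metric_dim V E + 2 ^ (card V - clique_number V E)"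
proof -
  have fin: "finite V" using g unfolding graph_def by blast
  obtain K where K: "clique V E K" "card K = clique_number V E"
    using clique_number_attained[OF fin] by blast
  obtain W where W: "local_resolving_set V E W" "card W = local_metric_dim V E"
    using minimum_local_resolving_set_exists by blast
  have KV: "K \<subseteq> V" and WV: "W \<subseteq> V"
    using K W unfolding clique_def local_resolving_set_def by auto
  have finK: "finite K" and finW: "finite W"
    using KV WV fin finite_subset by auto
  let ?t = "card (W - K)"
  have "?t \<le> card (V - K)" using WV fin by (intro card_mono) auto
  also have "card (V - K) = card V - card K" using KV fin by (simp add: card_Diff_subset finite_subset)
  finally have t: "?t \<le> card V - card K" .
  have "card W = card (W \<inter> K) + ?t" using card_Int_Diff[OF finW] .
  moreover have "card K = card (K \<inter> W) + card (K - W)" using card_Int_Diff[OF finK] .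
  moreover have "card (K - W) \<le> 2 ^ ?t"
    using card_clique_diff_local_resolving_set[OF g c K(1) W(1)] .
  moreover have "2 ^ ?t + (card V - card K) \<le> 2 ^ (card V - card K) + ?t"
    using pow2_add_le[OF t] .
  moreover have "card K \<le> card V" using KV fin by (rule card_mono[rotated])
  ultimately show ?thesis using K(2) W(2) by (simp add: Int_commute)
qed

definition true_twins_on :: "'a set \<Rightarrow> ('a \<Rightarrow> 'a \<Rightarrow> bool) \<Rightarrow> 'a \<Rightarrow> 'a \<Rightarrow> bool" where
  "true_twins_on S E r x \<longleftrightarrow> E r x \<and> (\<forall>w\<in>S - {r}. E w r \<longleftrightarrow> E w x)"

lemma true_twins_on_clique:
  assumes sym: "\<And>x y. E x y \<Longrightarrow> E y x"
    and twins: "\<forall>r\<in>R. true_twins_on R E r p \<or> true_twins_on R E r q"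
    and adj: "\<forall>r\<in>R. E r p" and "p \<in> V" "R \<subseteq> V"
  shows "clique V E (insert p R)"
  unfolding clique_def
proof (intro conjI ballI impI)
  fix a b assume ab: "a \<in> insert p R" "b \<in> insert p R" "a \<noteq> b"
  show "E a b"
  proof (cases "a = p \<or> b = p")
    case True
    then show ?thesis using adj ab sym by blast
  next
    case False
    then have a: "a \<in> R" and b: "b \<in> R" using ab by auto
    consider "true_twins_on R E a p" | "true_twins_on R E b p"
      | "true_twins_on R E a q" "true_twins_on R E b q"
      using twins a b by blast
    then show ?thesis
    proof cases
      case 1
      then show ?thesis using adj a b ab(3) sym unfolding true_twins_on_def by blast
    next
      case 2
      then show ?thesis using adj a b ab(3) unfolding true_twins_on_def by blast
    next
      case 3
      then show ?thesis using a b ab(3) unfolding true_twins_on_def by blast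
    qed
  qed
qed (use assms(4,5) in blast)

lemma true_twins_on_no_edge_between_sides:
  assumes sym: "\<And>x y. E x y \<Longrightarrow> E y x"
    and twins: "\<forall>r\<in>R. true_twins_on R E r p \<or> true_twins_on R E r q"
    and pq: "\<not> E p q"
    and r0: "r0 \<in> R" "\<not> E r0 p" and s0: "s0 \<in> R" "\<not> E s0 q"
    and u: "u \<in> insert p {r \<in> R. true_twins_on R E r p}"
    and v: "v \<in> insert q {r \<in> R. \<not> true_twins_on R E r p}"
  shows "\<not> E u v"
proof -
  have r0q: "true_twins_on R E r0 q" and s0p: "true_twins_on R E s0 p"
    using twins r0 s0 unfolding true_twins_on_def by blast+
  have p_side: "\<not> E x q" if "x \<in> R" "true_twins_on R E x p" for x
  proof -
    have "x \<noteq> r0" using that r0 unfolding true_twins_on_def by blast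
    then have "E x r0 \<longleftrightarrow> E x q" "E r0 x \<longleftrightarrow> E r0 p"
      using r0q r0(1) that unfolding true_twins_on_def by auto
    then show ?thesis using r0(2) sym by blast
  qed
  have q_side: "\<not> E y p" if "y \<in> R" "\<not> true_twins_on R E y p" for y
  proof -
    have yq: "true_twins_on R E y q" using twins that by blast
    have "y \<noteq> s0" using that s0p by blast
    then have "E y s0 \<longleftrightarrow> E y p" "E s0 y \<longleftrightarrow> E s0 q"
      using s0p yq that s0(1) unfolding true_twins_on_def by auto
    then show ?thesis using s0(2) sym by blast
  qed
  show ?thesis
  proof (cases "u = p")
    case True
    then show ?thesis using v pq q_side sym by blast
  next
    case False
    then have uR: "u \<in> R" and up: "true_twins_on R E u p" using u by auto
    show ?thesis
    proof (cases "v = q")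
      case True
      then show ?thesis using p_side[OF uR up] by simp
    next
      case False
      then have vR: "v \<in> R" and vp: "\<not> true_twins_on R E v p" using v by auto
      then have "v \<noteq> u" using up by blast
      then have "E v u \<longleftrightarrow> E v p" using up vR unfolding true_twins_on_def by blast
      then show ?thesis using q_side[OF vR vp] sym by blast
    qed
  qed
qed

lemma vertex_without_true_twin_exists:
  assumes g: "graph V E" and c: "connected V E"
    and pq: "p \<in> V" "q \<in> V" "p \<noteq> q" "\<not> E p q"
    and no_clique: "\<not> clique V E (insert p (V - {p, q}))" "\<not> clique V E (insert q (V - {p, q}))"
  obtains r where "r \<in> V - {p, q}"
    "\<not> true_twins_on (V - {p, q}) E r p" "\<not> true_twins_on (V - {p, q}) E r q"
proof (rule ccontr)
  define R where "R = V - {p, q}"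
  have RV: "R \<subseteq> V" and pqR: "p \<notin> R" "q \<notin> R" unfolding R_def by blast+
  assume "\<not> thesis"
  with that have twins: "\<forall>r\<in>R. true_twins_on R E r p \<or> true_twins_on R E r q"
    unfolding R_def by blast
  then have twins': "\<forall>r\<in>R. true_twins_on R E r q \<or> true_twins_on R E r p"
    by (simp add: disj_commute)
  have sym: "\<And>x y. E x y \<Longrightarrow> E y x" and inV: "\<And>x y. E x y \<Longrightarrow> y \<in> V"
    using g unfolding graph_def by blast+
  have "\<not> (\<forall>r\<in>R. E r p)"
    using true_twins_on_clique[OF sym twins _ pq(1) RV] no_clique(1) unfolding R_def by blast
  then obtain r0 where r0: "r0 \<in> R" "\<not> E r0 p" by blast
  have "\<not> (\<forall>r\<in>R. E r q)"
    using true_twins_on_clique[OF sym twins' _ pq(2) RV] no_clique(2) unfolding R_def by blast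
  then obtain s0 where s0: "s0 \<in> R" "\<not> E s0 q" by blast
  define P where "P = {r \<in> R. true_twins_on R E r p}"
  have "p \<in> insert p P" "q \<notin> insert p P" using pq(3) pqR unfolding P_def by auto
  then obtain u v where uv: "u \<in> insert p P" "v \<notin> insert p P" "E u v"
    using connected_crossing_edge[OF c _ pq(1,2)] by metis
  then have "v \<in> insert q {r \<in> R. \<not> true_twins_on R E r p}"
    using inV unfolding P_def R_def by blast
  then show False
    using true_twins_on_no_edge_between_sides[OF sym twins pq(4) r0 s0] uv(1,3)
    unfolding P_def by blast
qed

lemma local_resolving_set_Diff_three:
  assumes g: "graph V E" and c: "connected V E"
    and pq: "p \<in> V" "q \<in> V" "\<not> E p q" and r: "r \<in> V - {p, q}"
    and no_twin: "\<not> true_twins_on (V - {p, q}) E r p" "\<not> true_twins_on (V - {p, q}) E r q"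
  shows "local_resolving_set V E (V - {p, q, r})"
  unfolding local_resolving_set_def
proof (intro conjI ballI impI)
  have sym: "\<And>x y. E x y \<Longrightarrow> E y x" using g unfolding graph_def by blast
  have resolved: "\<exists>w\<in>V - {p, q, r}. dist E r w \<noteq> dist E x w"
    if x: "x \<in> {p, q}" and rx: "E r x" for x
  proof -
    have "\<not> true_twins_on (V - {p, q}) E r x" using no_twin x by blast
    then obtain w where "w \<in> V - {p, q} - {r}" "E w r \<noteq> E w x"
      using rx unfolding true_twins_on_def by blast
    then show ?thesis using dist_neq_if_adjacent_to_one[OF g c] r pq(1,2) x by blast
  qed
  fix u v assume "u \<in> V - (V - {p, q, r})" "v \<in> V - (V - {p, q, r})" and uv: "E u v"
  moreover have "u \<noteq> v" using uv g unfolding graph_def by blast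
  ultimately consider "u = r" "v \<in> {p, q}" | "v = r" "u \<in> {p, q}"
    using pq(3) sym by blast
  then show "\<exists>w\<in>V - {p, q, r}. dist E u w \<noteq> dist E v w"
  proof cases
    case 1
    then show ?thesis using resolved uv by blast
  next
    case 2
    then obtain w where "w \<in> V - {p, q, r}" "dist E r w \<noteq> dist E u w"
      using resolved[of u] uv sym by blast
    then show ?thesis using 2(1) by (intro bexI[of _ w]) auto
  qed
qed simp

lemma local_metric_dim_le_card_minus_3:
  assumes g: "graph V E" and c: "connected V E" and "clique_number V E + 2 \<le> card V"
  shows "local_metric_dim V E + 3 \<le> card V"
proof -
  have fin: "finite V" using g unfolding graph_def by blast
  have small: "card K + 2 \<le> card V" if "clique V E K" for K
    using card_le_clique_number[OF fin that] assms(3) by linarith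
  obtain p q where pq: "p \<in> V" "q \<in> V" "p \<noteq> q" "\<not> E p q"
    using small[of V] unfolding clique_def by auto
  have "card {p, q} \<le> card V" using pq fin by (intro card_mono) auto
  then have "card (insert x (V - {p, q})) + 1 = card V" if "x \<in> {p, q}" for x
    using that pq fin by (auto simp: card_Diff_subset)
  then have "\<not> clique V E (insert x (V - {p, q}))" if "x \<in> {p, q}" for x
    using small that by fastforce
  then obtain r where r: "r \<in> V - {p, q}"
    "\<not> true_twins_on (V - {p, q}) E r p" "\<not> true_twins_on (V - {p, q}) E r q"
    using vertex_without_true_twin_exists[OF g c pq] by blast
  have "local_metric_dim V E \<le> card (V - {p, q, r})"
    using local_metric_dim_le local_resolving_set_Diff_three[OF g c pq(1,2,4) r] by blast
  moreover have "card {p, q, r} \<le> card V" using pq r fin by (intro card_mono) auto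
  then have "card (V - {p, q, r}) + 3 = card V"
    using pq r fin by (auto simp: card_Diff_subset)
  ultimately show ?thesis by linarith
qed

definition bits_graph :: "nat \<Rightarrow> nat \<Rightarrow> bool" where
  "bits_graph u v \<longleftrightarrow> (u < 8 \<and> v < 8 \<and> u \<noteq> v)
     \<or> (u < 8 \<and> v \<in> {8, 9, 10} \<and> odd (u div 2 ^ (v - 8)))
     \<or> (v < 8 \<and> u \<in> {8, 9, 10} \<and> odd (v div 2 ^ (u - 8)))"

lemma less_8_cases: "(u::nat) < 8 \<longleftrightarrow> u \<in> {0, 1, 2, 3, 4, 5, 6, 7}"
  by auto

lemma graph_bits_graph: "graph {..<11} bits_graph"
  unfolding graph_def bits_graph_def by auto

lemma bits_graph_connected: "connected {..<11} bits_graph"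
proof (rule connected_if_walks_to[OF graph_bits_graph, of 7])
  fix u :: nat assume "u \<in> {..<11}"
  then have "u < 8 \<or> u \<in> {8, 9, 10}" by auto
  then have "walk bits_graph (if u = 7 then [7] else [u, 7])"
    by (auto simp: bits_graph_def)
  then show "\<exists>xs. walk bits_graph xs \<and> hd xs = u \<and> last xs = 7" by fastforce
qed simp

lemma bits_graph_clique_number: "clique_number {..<11} bits_graph = 8"
proof (rule clique_number_eqI)
  show "clique {..<11} bits_graph {..<8}" unfolding clique_def bits_graph_def by auto
next
  fix C assume C: "clique {..<11} bits_graph C"
  show "card C \<le> 8"
  proof (cases "C \<subseteq> {..<8}")
    case True
    then show ?thesis using card_mono[of "{..<8::nat}" C] by simp
  next
    case False
    then obtain x where "x \<in> C" "\<not> x < 8" by auto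
    then have x: "x \<in> C" "x \<in> {8, 9, 10}" using C unfolding clique_def by auto
    have "C \<subseteq> insert x {1..<8}"
    proof
      fix y assume "y \<in> C"
      show "y \<in> insert x {1..<8}"
      proof (cases "y = x")
        case False
        then have "bits_graph y x" using C x(1) \<open>y \<in> C\<close> unfolding clique_def by blast
        then show ?thesis using x(2) unfolding bits_graph_def by (cases "y = 0") auto
      qed simp
    qed
    then have "card C \<le> card (insert x {1..<8::nat})" by (intro card_mono) auto
    also have "\<dots> \<le> 8" by (simp add: card_insert_if)
    finally show ?thesis .
  qed
qed auto

lemma bits_graph_separates:
  "u < 8 \<Longrightarrow> v < 8 \<Longrightarrow> u \<noteq> v \<Longrightarrow> \<exists>w\<in>{8, 9, 10}. bits_graph w u \<noteq> bits_graph w v"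
  unfolding less_8_cases by (elim insertE emptyE) (simp_all add: bits_graph_def)

lemma bits_graph_local_resolving_set: "local_resolving_set {..<11} bits_graph {8, 9, 10}"
  unfolding local_resolving_set_def
proof (intro conjI ballI impI)
  fix u v assume u: "u \<in> {..<11} - {8, 9, 10}" and v: "v \<in> {..<11} - {8, 9, 10}"
    and uv: "bits_graph u v"
  then have "u < 8" "v < 8" "u \<noteq> v" unfolding bits_graph_def by auto
  then obtain w where w: "w \<in> {8, 9, 10}" "bits_graph w u \<noteq> bits_graph w v"
    using bits_graph_separates by blast
  then have "dist bits_graph u w \<noteq> dist bits_graph v w"
    using dist_neq_if_adjacent_to_one[OF graph_bits_graph bits_graph_connected] u v by auto
  then show "\<exists>w\<in>{8, 9, 10}. dist bits_graph u w \<noteq> dist bits_graph v w" using w(1) by blast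
qed auto

definition cycle5 :: "nat \<Rightarrow> nat \<Rightarrow> bool" where
  "cycle5 u v \<longleftrightarrow> u < 5 \<and> v < 5 \<and> (v = Suc u mod 5 \<or> u = Suc v mod 5)"

lemma less_5_cases: "(u::nat) < 5 \<longleftrightarrow> u \<in> {0, 1, 2, 3, 4}"
  by auto

lemma graph_cycle5: "graph {..<5} cycle5"
proof -
  have "\<not> cycle5 v v" for v unfolding cycle5_def using less_5_cases[of v] by auto
  then show ?thesis unfolding graph_def by (auto simp: cycle5_def)
qed

lemma cycle5_connected: "connected {..<5} cycle5"
proof (rule connected_if_walks_to[OF graph_cycle5, of 0])
  fix u :: nat assume "u \<in> {..<5}"
  then have "walk cycle5 (rev [0..<Suc u])"
    unfolding lessThan_iff less_5_cases by (elim insertE emptyE) (simp_all add: cycle5_def upt_rec)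
  then show "\<exists>xs. walk cycle5 xs \<and> hd xs = u \<and> last xs = 0"
    by (intro exI[of _ "rev [0..<Suc u]"]) (simp add: hd_rev last_rev)
qed simp

lemma cycle5_triangle_free: "\<not> (cycle5 a b \<and> cycle5 b c \<and> cycle5 a c)"
proof
  assume abc: "cycle5 a b \<and> cycle5 b c \<and> cycle5 a c"
  then have "a \<in> {0, 1, 2, 3, 4}" "b \<in> {0, 1, 2, 3, 4}" "c \<in> {0, 1, 2, 3, 4}"
    unfolding cycle5_def less_5_cases by auto
  then show False using abc by (elim insertE emptyE; simp add: cycle5_def)
qed

lemma cycle5_clique_number: "clique_number {..<5} cycle5 = 2"
proof (rule clique_number_eqI)
  show "clique {..<5} cycle5 {0, 1}" unfolding clique_def cycle5_def by auto
next
  fix C assume C: "clique {..<5} cycle5 C"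
  show "card C \<le> 2"
  proof (rule ccontr)
    assume "\<not> card C \<le> 2"
    then have "3 \<le> card C" by simp
    then obtain T where "T \<subseteq> C" "card T = 3" by (meson obtain_subset_with_card_n)
    then obtain a b c where "{a, b, c} \<subseteq> C" "a \<noteq> b" "b \<noteq> c" "a \<noteq> c" by (auto simp: card_3_iff)
    then show False using C cycle5_triangle_free[of a b c] unfolding clique_def by auto
  qed
qed (auto simp: card_insert_if)

lemma cycle5_dist_opposite:
  assumes "w < 5"
  shows "dist cycle5 ((w + 2) mod 5) w = 2" "dist cycle5 ((w + 3) mod 5) w = 2"
proof -
  have w: "w = 0 \<or> w = 1 \<or> w = 2 \<or> w = 3 \<or> w = 4" using assms by auto
  show "dist cycle5 ((w + 2) mod 5) w = 2"
    by (rule dist_eq_2[of _ _ _ "(w + 1) mod 5"]; insert w; elim disjE; simp add: cycle5_def)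
  show "dist cycle5 ((w + 3) mod 5) w = 2"
    by (rule dist_eq_2[of _ _ _ "(w + 4) mod 5"]; insert w; elim disjE; simp add: cycle5_def)
qed

lemma cycle5_local_resolving_set_card:
  assumes "local_resolving_set {..<5} cycle5 W"
  shows "2 \<le> card W"
proof (rule ccontr)
  assume "\<not> 2 \<le> card W"
  moreover have "finite W" using assms finite_subset unfolding local_resolving_set_def by blast
  ultimately consider "W = {}" | w where "W = {w}"
    by (metis card_0_eq card_1_singleton_iff less_2_cases not_le)
  then show False
  proof cases
    case 1
    have "cycle5 0 1" by (simp add: cycle5_def)
    moreover have "(0::nat) \<in> {..<5} - W" "(1::nat) \<in> {..<5} - W" using 1 by auto
    ultimately show False using assms 1 unfolding local_resolving_set_def by blast
  next
    case 2
    then have "w < 5" using assms unfolding local_resolving_set_def by auto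
    let ?u = "(w + 2) mod 5" and ?v = "(w + 3) mod 5"
    have "cycle5 ?u ?v" "?u \<noteq> w" "?v \<noteq> w" unfolding cycle5_def by presburger+
    then have "cycle5 ?u ?v" "?u \<in> {..<5} - W" "?v \<in> {..<5} - W" using 2 by auto
    then obtain w' where "w' \<in> W" "dist cycle5 ?u w' \<noteq> dist cycle5 ?v w'"
      using assms unfolding local_resolving_set_def by blast
    then show False using 2 cycle5_dist_opposite[OF \<open>w < 5\<close>] by simp
  qed
qed

lemma bits_graph_local_metric_dim: "local_metric_dim {..<11} bits_graph = 3"
proof -
  have "local_metric_dim {..<11} bits_graph \<le> 3"
    using local_metric_dim_le[OF bits_graph_local_resolving_set] by simp
  moreover have "card {..<11::nat} \<le> local_metric_dim {..<11} bits_graph + 2 ^ (11 - 8)"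
    using card_le_local_metric_dim_plus_pow2[OF graph_bits_graph bits_graph_connected]
    by (simp add: bits_graph_clique_number)
  ultimately show ?thesis by simp
qed

lemma cycle5_local_metric_dim: "local_metric_dim {..<5} cycle5 = 2"
proof -
  have "local_metric_dim {..<5} cycle5 + 3 \<le> card {..<5::nat}"
    using local_metric_dim_le_card_minus_3[OF graph_cycle5 cycle5_connected]
    by (simp add: cycle5_clique_number)
  moreover obtain W where "local_resolving_set {..<5} cycle5 W" "card W = local_metric_dim {..<5} cycle5"
    using minimum_local_resolving_set_exists by blast
  then have "2 \<le> local_metric_dim {..<5} cycle5"
    using cycle5_local_resolving_set_card by metis
  ultimately show ?thesis by simp
qed

theorem corollary2p3:
  fixes V :: "'a set" and E :: "'a \<Rightarrow> 'a \<Rightarrow> bool"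
  shows "(graph V E \<and> connected V E \<and> clique_number V E + 3 = card V \<longrightarrow>
            card V - 8 \<le> local_metric_dim V E \<and> local_metric_dim V E + 3 \<le> card V)
    \<and> (\<exists>(V' :: nat set) E'. graph V' E' \<and> connected V' E' \<and> clique_number V' E' + 3 = card V'
            \<and> local_metric_dim V' E' + 8 = card V')
    \<and> (\<exists>(V' :: nat set) E'. graph V' E' \<and> connected V' E' \<and> clique_number V' E' + 3 = card V'
            \<and> local_metric_dim V' E' + 3 = card V')"
proof (intro conjI impI)
  assume "graph V E \<and> connected V E \<and> clique_number V E + 3 = card V"
  then have g: "graph V E" and c: "connected V E" and \<omega>: "clique_number V E + 3 = card V"
    by auto
  have "card V - clique_number V E = 3" using \<omega> by simp
  then show "card V - 8 \<le> local_metric_dim V E"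
    using card_le_local_metric_dim_plus_pow2[OF g c] by simp
  show "local_metric_dim V E + 3 \<le> card V"
    using local_metric_dim_le_card_minus_3[OF g c] \<omega> by simp
next
  show "\<exists>(V' :: nat set) E'. graph V' E' \<and> connected V' E' \<and> clique_number V' E' + 3 = card V'
          \<and> local_metric_dim V' E' + 8 = card V'"
    using graph_bits_graph bits_graph_connected bits_graph_clique_number bits_graph_local_metric_dim
    by (intro exI[of _ "{..<11}"] exI[of _ bits_graph]) simp
next
  show "\<exists>(V' :: nat set) E'. graph V' E' \<and> connected V' E' \<and> clique_number V' E' + 3 = card V'
          \<and> local_metric_dim V' E' + 3 = card V'"
    using graph_cycle5 cycle5_connected cycle5_clique_number cycle5_local_metric_dim
    by (intro exI[of _ "{..<5}"] exI[of _ cycle5]) simp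
qed

end
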